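(* Under the setting of the context, if (TS1) holds then the solution $u$ of problem (P) satisfies $u(x,t)\ge0$ for all $(x,t)\in\Omega$.
   Context: A time scale $\mathbb{T}$ is a nonempty closed subset of $\mathbb{R}$; here $\min\mathbb{T}=0$ and $\sup\mathbb{T}=+\infty$. $\sigma(t)=\inf\{s\in\mathbb{T}:s>t\}$ is the forward jump and $\mu_t(t)=\sigma(t)-t$ the graininess; $u^{\Delta_t}$ denotes the (Hilger) delta derivative in $t$. Fix $A>0$, $k>0$, $\mu_x>0$, $\Omega=\mu_x\mathbb{Z}\times\mathbb{T}$. Problem (P): $u^{\Delta_t}(x,t)+k\frac{u(x,t)-u(x-\mu_x,t)}{\mu_x}=0$ for $(x,t)\in\Omega$, $u(0,0)=A$, $u(x,0)=0$ for $x\ne0$. A solution is $u:\Omega\to\mathbb{R}$ with each $u(x,\cdot)$ delta differentiable on $\mathbb{T}$, satisfying (P), and bounded on $\mu_x\mathbb{Z}\times(\mathbb{T}\cap[0,T_0])$ for every $T_0>0$. Condition (TS1): $1-\frac{k\mu_t(t)}{\mu_x}>0$ for all $t\in\mathbb{T}$. *)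

theory Defs
  imports Complex_Main
begin

definition time_scale0 :: "real set \<Rightarrow> bool" where
  "time_scale0 TS \<longleftrightarrow> closed TS \<and> 0 \<in> TS \<and> (\<forall>t\<in>TS. 0 \<le> t) \<and> \<not> bdd_above TS"

definition sigma :: "real set \<Rightarrow> real \<Rightarrow> real" where
  "sigma TS t = Inf {s \<in> TS. s > t}"

definition graininess :: "real set \<Rightarrow> real \<Rightarrow> real" where
  "graininess TS t = sigma TS t - t"

definition has_delta_derivative :: "real set \<Rightarrow> (real \<Rightarrow> real) \<Rightarrow> real \<Rightarrow> real \<Rightarrow> bool" where
  "has_delta_derivative TS f D t \<longleftrightarrow>
     (\<forall>\<epsilon>>0. \<exists>\<delta>>0. \<forall>s\<in>TS. \<bar>s - t\<bar> < \<delta> \<longrightarrow>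
        \<bar>f (sigma TS t) - f s - D * (sigma TS t - s)\<bar> \<le> \<epsilon> * \<bar>sigma TS t - s\<bar>)"

definition grid :: "real \<Rightarrow> real set" where
  "grid h = {h * of_int n | n. True}"

definition is_solution_P ::
  "real set \<Rightarrow> real \<Rightarrow> real \<Rightarrow> real \<Rightarrow> (real \<Rightarrow> real \<Rightarrow> real) \<Rightarrow> bool" where
  "is_solution_P TS A k mux u \<longleftrightarrow>
     (\<forall>x\<in>grid mux. \<forall>t\<in>TS. \<exists>D. has_delta_derivative TS (u x) D t \<and>
         D + k * (u x t - u (x - mux) t) / mux = 0)
   \<and> u 0 0 = A
   \<and> (\<forall>x\<in>grid mux. x \<noteq> 0 \<longrightarrow> u x 0 = 0)
   \<and> (\<forall>T0>0. \<exists>B. \<forall>x\<in>grid mux. \<forall>t\<in>TS. t \<le> T0 \<longrightarrow> \<bar>u x t\<bar> \<le> B)"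

end

theory Submission
  imports Defs "HOL-Analysis.Elementary_Metric_Spaces"
begin

(* Write a = k/mux, so that on every grid line the equation reads f^Delta = -a (f - g)
   with f = u(x,.) and g = u(x - mux,.).  At right-scattered times this means
   f(sigma t) = (1 - a mu(t)) f(t) + a mu(t) g(t), a convex combination by (TS1); at
   right-dense times it is an ordinary one-sided derivative.  Since the grid is
   infinite, a minimum principle cannot be applied directly.  Instead lower bounds
   contract: if -u <= K e^(2at) on all grid lines up to time T, then
   -u <= (3/4) K e^(2at) there, which follows from the induction principle on time
   scales applied to u(x,.) + (3/4) K e^(2a.).  Starting from the a priori bound of the
   solution and iterating gives -u <= (3/4)^n K e^(2at) for all n, hence u >= 0. *)

lemma sigma_le:
  assumes "s \<in> TS" "t < s"
  shows "sigma TS t \<le> s"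
  using assms unfolding sigma_def by (intro cInf_lower bdd_belowI[of _ t]) auto

lemma sigma_ge:
  assumes "s \<in> TS" "t < s"
  shows "t \<le> sigma TS t"
  unfolding sigma_def by (rule cInf_greatest) (use assms in auto)

lemma sigma_eqI:
  assumes "t \<in> TS" "r < t" "\<forall>s\<in>TS. r < s \<longrightarrow> t \<le> s"
  shows "sigma TS r = t"
  using assms unfolding sigma_def by (intro antisym cInf_lower cInf_greatest) auto

lemma time_scale0_sigma_ge:
  assumes "time_scale0 TS"
  shows "t \<le> sigma TS t"
proof -
  have "\<not> bdd_above TS" using assms by (simp add: time_scale0_def)
  then obtain s where "s \<in> TS" "t < s" by (meson bdd_above_def not_le)
  then show ?thesis by (rule sigma_ge)
qed

lemma left_scattered_predecessor:
  assumes closed: "closed TS" and "a \<in> TS" "a < t" "t \<in> TS"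
    and not_left_dense: "\<not> (\<forall>d>0. \<exists>s\<in>TS. t - d < s \<and> s < t)"
  shows "\<exists>r\<in>TS. a \<le> r \<and> r < t \<and> sigma TS r = t"
proof -
  obtain d where "d > 0" and gap: "\<not> (\<exists>s\<in>TS. t - d < s \<and> s < t)"
    using not_left_dense by blast
  have d: "d > 0" "\<forall>s\<in>TS. s < t \<longrightarrow> s \<le> t - d"
    using \<open>d > 0\<close> gap by (auto simp: not_less[symmetric])
  define L where "L = {s \<in> TS. a \<le> s \<and> s < t}"
  have L: "L \<noteq> {}" "bdd_above L" "L \<subseteq> TS"
    using assms(2-4) by (auto simp: L_def intro: bdd_aboveI[of _ t])
  define r where "r = Sup L"
  have "r \<in> TS" unfolding r_def by (rule closed_subset_contains_Sup[OF closed L(3,1,2)])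
  moreover have "a \<le> r" unfolding r_def using assms L by (intro cSup_upper) (auto simp: L_def)
  moreover have "r \<le> t - d" unfolding r_def using L d by (intro cSup_least) (auto simp: L_def)
  moreover have "t \<le> s" if "s \<in> TS" "r < s" for s
  proof (rule ccontr)
    assume "\<not> t \<le> s"
    then have "s \<in> L" using that \<open>a \<le> r\<close> by (auto simp: L_def)
    then have "s \<le> r" unfolding r_def using L(2) by (rule cSup_upper)
    with that(2) show False by simp
  qed
  ultimately show ?thesis using d(1) \<open>t \<in> TS\<close> by (intro bexI[of _ r]) (auto intro: sigma_eqI)
qed

lemma delta_derivative_sigma:
  assumes der: "has_delta_derivative TS f D t" and "t \<in> TS" and mu: "t \<le> sigma TS t"
  shows "f (sigma TS t) = f t + (sigma TS t - t) * D"
proof -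
  define m where "m = sigma TS t - t"
  have small: "\<bar>f (sigma TS t) - f t - D * m\<bar> \<le> e * m" if "e > 0" for e
  proof -
    obtain d where "d > 0" "\<forall>s\<in>TS. \<bar>s - t\<bar> < d \<longrightarrow>
        \<bar>f (sigma TS t) - f s - D * (sigma TS t - s)\<bar> \<le> e * \<bar>sigma TS t - s\<bar>"
      using der \<open>e > 0\<close> unfolding has_delta_derivative_def by blast
    then have "\<bar>f (sigma TS t) - f t - D * m\<bar> \<le> e * \<bar>m\<bar>"
      using \<open>t \<in> TS\<close> by (simp add: m_def)
    then show ?thesis using mu by (simp add: m_def)
  qed
  have "\<bar>f (sigma TS t) - f t - D * m\<bar> \<le> 0"
  proof (rule field_le_epsilon)
    fix e :: real assume "e > 0"
    have "m \<ge> 0" using mu by (simp add: m_def)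
    then have "e / (m + 1) * m \<le> e" using \<open>e > 0\<close> by (simp add: field_simps)
    then show "\<bar>f (sigma TS t) - f t - D * m\<bar> \<le> 0 + e"
      using small[of "e / (m + 1)"] \<open>e > 0\<close> \<open>m \<ge> 0\<close> by simp
  qed
  then show ?thesis by (simp add: m_def algebra_simps)
qed

lemma delta_derivative_continuous:
  assumes der: "has_delta_derivative TS f D t" and "t \<in> TS" and mu: "t \<le> sigma TS t"
  shows "(f \<longlongrightarrow> f t) (at t within TS)"
  unfolding tendsto_iff eventually_at
proof (intro allI impI)
  fix e :: real assume e: "e > 0"
  define m where "m = sigma TS t - t"
  have m: "m \<ge> 0" using mu by (simp add: m_def)
  define ep where "ep = e / (2 * (m + 1))"
  have ep: "ep > 0" using e m by (simp add: ep_def)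
  obtain d where d: "d > 0" "\<forall>s\<in>TS. \<bar>s - t\<bar> < d \<longrightarrow>
      \<bar>f (sigma TS t) - f s - D * (sigma TS t - s)\<bar> \<le> ep * \<bar>sigma TS t - s\<bar>"
    using der ep unfolding has_delta_derivative_def by blast
  define d' where "d' = min d (min 1 (e / (2 * (\<bar>D\<bar> + 1))))"
  have "d' > 0" using d e by (simp add: d'_def)
  moreover have "dist (f s) (f t) < e" if s: "s \<in> TS" "dist s t < d'" for s
  proof -
    have st: "\<bar>s - t\<bar> < 1" "\<bar>s - t\<bar> < d" "\<bar>s - t\<bar> < e / (2 * (\<bar>D\<bar> + 1))"
      using s by (auto simp: d'_def dist_real_def)
    have split: "f s - f t = D * (s - t) - (f (sigma TS t) - f s - D * (sigma TS t - s))"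
      using delta_derivative_sigma[OF assms] by (simp add: algebra_simps)
    have "\<bar>sigma TS t - s\<bar> \<le> m + 1" using st(1) m by (simp add: m_def abs_le_iff abs_less_iff)
    then have "ep * \<bar>sigma TS t - s\<bar> \<le> ep * (m + 1)" using ep by (intro mult_left_mono) auto
    also have "\<dots> = e / 2" using m by (simp add: ep_def field_simps)
    finally have "ep * \<bar>sigma TS t - s\<bar> \<le> e / 2" .
    moreover have "\<bar>f (sigma TS t) - f s - D * (sigma TS t - s)\<bar> \<le> ep * \<bar>sigma TS t - s\<bar>"
      using d(2) s(1) st(2) by blast
    ultimately have remainder: "\<bar>f (sigma TS t) - f s - D * (sigma TS t - s)\<bar> \<le> e / 2"
      by linarith
    have "\<bar>D * (s - t)\<bar> \<le> \<bar>D\<bar> * (e / (2 * (\<bar>D\<bar> + 1)))"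
      unfolding abs_mult using st(3) by (intro mult_left_mono) auto
    also have "\<dots> < e / 2" using e by (simp add: field_simps)
    finally have linear: "\<bar>D * (s - t)\<bar> < e / 2" .
    have "\<bar>f s - f t\<bar> \<le> \<bar>D * (s - t)\<bar> + \<bar>f (sigma TS t) - f s - D * (sigma TS t - s)\<bar>"
      unfolding split by (rule abs_triangle_ineq4)
    then show ?thesis using linear remainder by (simp add: dist_real_def)
  qed
  ultimately show "\<exists>d>0. \<forall>s\<in>TS. s \<noteq> t \<and> dist s t < d \<longrightarrow> dist (f s) (f t) < e" by blast
qed

lemma delta_derivative_right_dense:
  assumes der: "has_delta_derivative TS f D t" and dense: "sigma TS t = t" and "e > 0"
  shows "\<exists>d>0. \<forall>s\<in>TS. t < s \<and> s < t + d \<longrightarrow> f s \<ge> f t + (D - e) * (s - t)"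
proof -
  obtain d where d: "d > 0" "\<forall>s\<in>TS. \<bar>s - t\<bar> < d \<longrightarrow> \<bar>f t - f s - D * (t - s)\<bar> \<le> e * \<bar>t - s\<bar>"
    using der \<open>e > 0\<close> unfolding has_delta_derivative_def dense by blast
  have "f s \<ge> f t + (D - e) * (s - t)" if "s \<in> TS" "t < s" "s < t + d" for s
    using d(2) that by (auto simp: abs_le_iff algebra_simps)
  with d(1) show ?thesis by blast
qed

section \<open>The induction principle on time scales\<close>

theorem time_scale_induction:
  fixes TS :: "real set" and P :: "real \<Rightarrow> bool"
  assumes closed: "closed TS" and a: "a \<in> TS" "P a"
    and right_scattered: "\<And>t. t \<in> TS \<Longrightarrow> a \<le> t \<Longrightarrow> t < sigma TS t \<Longrightarrow> sigma TS t \<le> T \<Longrightarrow>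
        P t \<Longrightarrow> P (sigma TS t)"
    and right_dense: "\<And>t. t \<in> TS \<Longrightarrow> a \<le> t \<Longrightarrow> t < T \<Longrightarrow> sigma TS t = t \<Longrightarrow> P t \<Longrightarrow>
        \<exists>d>0. \<forall>s\<in>TS. t < s \<and> s < t + d \<longrightarrow> P s"
    and left_dense: "\<And>t. t \<in> TS \<Longrightarrow> a < t \<Longrightarrow> t \<le> T \<Longrightarrow> \<forall>d>0. \<exists>s\<in>TS. t - d < s \<and> s < t \<Longrightarrow>
        \<forall>s\<in>TS. a \<le> s \<and> s < t \<longrightarrow> P s \<Longrightarrow> P t"
  shows "\<forall>t\<in>TS. a \<le> t \<and> t \<le> T \<longrightarrow> P t"
proof (rule ccontr)
  text \<open>Consider the first failure t0, the infimum of all failures.\<close>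
  define Bad where "Bad = {t \<in> TS. a \<le> t \<and> t \<le> T \<and> \<not> P t}"
  assume "\<not> ?thesis"
  then obtain b0 where b0: "b0 \<in> Bad" by (auto simp: Bad_def)
  have bdd: "bdd_below Bad" by (auto simp: Bad_def bdd_below_def)
  define t0 where "t0 = Inf Bad"
  have t0: "t0 \<in> TS" unfolding t0_def
    using closed_subset_contains_Inf[OF closed _ _ bdd] b0 by (auto simp: Bad_def)
  have first: "t0 \<le> b" if "b \<in> Bad" for b unfolding t0_def using that bdd by (rule cInf_lower)
  have "a \<le> t0" unfolding t0_def using b0 by (intro cInf_greatest) (auto simp: Bad_def)
  have "t0 \<le> T" using first[OF b0] b0 by (auto simp: Bad_def)
  have below: "P s" if "s \<in> TS" "a \<le> s" "s < t0" for s
  proof (rule ccontr)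
    assume "\<not> P s"
    then have "s \<in> Bad" using that \<open>t0 \<le> T\<close> by (auto simp: Bad_def)
    with first that(3) show False by fastforce
  qed
  show False
  proof (cases "P t0")
    case False
    text \<open>The first failure is not a: it is reached either from the left or by a jump.\<close>
    have "a < t0" using \<open>a \<le> t0\<close> a(2) False by (cases "a = t0") auto
    show False
    proof (cases "\<forall>d>0. \<exists>s\<in>TS. t0 - d < s \<and> s < t0")
      case True
      then show False using left_dense[OF t0 \<open>a < t0\<close> \<open>t0 \<le> T\<close>] below False by blast
    next
      case not_left_dense: False
      obtain r where r: "r \<in> TS" "a \<le> r" "r < t0" "sigma TS r = t0"
        using left_scattered_predecessor[OF closed a(1) \<open>a < t0\<close> t0 not_left_dense] by blast
      then show False using right_scattered[of r] below[of r] \<open>t0 \<le> T\<close> False by simp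
    qed
  next
    case True
    text \<open>The first failure holds itself, so failures accumulate at t0 from the right.\<close>
    have after: "t0 < b" if "b \<in> Bad" for b
      using first[OF that] that True by (cases "b = t0") (auto simp: Bad_def)
    have "t0 < T" using after[OF b0] b0 by (auto simp: Bad_def)
    have "sigma TS t0 \<le> b" if "b \<in> Bad" for b
      using sigma_le after[OF that] that by (auto simp: Bad_def)
    then have "sigma TS t0 \<le> t0" unfolding t0_def using b0 by (intro cInf_greatest) auto
    then have "sigma TS t0 = t0" using sigma_ge[of b0 TS t0] after[OF b0] b0 by (auto simp: Bad_def)
    then obtain d where d: "d > 0" "\<forall>s\<in>TS. t0 < s \<and> s < t0 + d \<longrightarrow> P s"
      using right_dense[OF t0 \<open>a \<le> t0\<close> \<open>t0 < T\<close>] True by blast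
    obtain b where "b \<in> Bad" "b < t0 + d"
      using cInf_lessD[of Bad "t0 + d"] b0 d(1) by (auto simp: t0_def)
    then show False using d(2) after by (auto simp: Bad_def)
  qed
qed

text \<open>Continuity takes care of left-dense points and of right-dense points
  where the function is positive; only the zeros at right-dense points remain.\<close>
corollary time_scale_induction_nonneg:
  fixes h :: "real \<Rightarrow> real"
  assumes closed: "closed TS" and a: "a \<in> TS" "h a \<ge> 0"
    and cont: "\<And>t. t \<in> TS \<Longrightarrow> (h \<longlongrightarrow> h t) (at t within TS)"
    and right_scattered: "\<And>t. t \<in> TS \<Longrightarrow> a \<le> t \<Longrightarrow> t < sigma TS t \<Longrightarrow> sigma TS t \<le> T \<Longrightarrow>
        h t \<ge> 0 \<Longrightarrow> h (sigma TS t) \<ge> 0"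
    and right_dense_zero: "\<And>t. t \<in> TS \<Longrightarrow> a \<le> t \<Longrightarrow> t < T \<Longrightarrow> sigma TS t = t \<Longrightarrow> h t = 0 \<Longrightarrow>
        \<exists>d>0. \<forall>s\<in>TS. t < s \<and> s < t + d \<longrightarrow> h s \<ge> 0"
  shows "\<forall>t\<in>TS. a \<le> t \<and> t \<le> T \<longrightarrow> h t \<ge> 0"
proof (rule time_scale_induction[where P = "\<lambda>t. h t \<ge> 0", OF closed a])
  fix t assume t: "t \<in> TS" "a \<le> t" "t < T" "sigma TS t = t" "h t \<ge> 0"
  show "\<exists>d>0. \<forall>s\<in>TS. t < s \<and> s < t + d \<longrightarrow> h s \<ge> 0"
  proof (cases "h t = 0")
    case False
    then have "h t > 0" using t(5) by simp
    then obtain d where "d > 0" and near: "\<forall>s\<in>TS. s \<noteq> t \<and> dist s t < d \<longrightarrow> dist (h s) (h t) < h t"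
      using cont[OF t(1)] unfolding tendsto_iff eventually_at by blast
    have "h s \<ge> 0" if "s \<in> TS" "t < s" "s < t + d" for s
      using near that by (auto simp: dist_real_def)
    with \<open>d > 0\<close> show ?thesis by blast
  qed (use right_dense_zero t in auto)
next
  fix t assume t: "t \<in> TS" "a < t" and left: "\<forall>d>0. \<exists>s\<in>TS. t - d < s \<and> s < t"
    and before: "\<forall>s\<in>TS. a \<le> s \<and> s < t \<longrightarrow> h s \<ge> 0"
  show "h t \<ge> 0"
  proof (rule ccontr)
    assume "\<not> h t \<ge> 0"
    then have "- h t > 0" by simp
    then obtain d where d: "d > 0" "\<forall>s\<in>TS. s \<noteq> t \<and> dist s t < d \<longrightarrow> dist (h s) (h t) < - h t"
      using cont[OF t(1)] unfolding tendsto_iff eventually_at by blast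
    have "min d (t - a) > 0" using d(1) t(2) by simp
    then obtain s where "s \<in> TS" "t - min d (t - a) < s" "s < t"
      using left by blast
    then have "dist (h s) (h t) < - h t" "h s \<ge> 0" using d(2) before t(2) by (auto simp: dist_real_def)
    then show False by (simp add: dist_real_def)
  qed
qed (use right_scattered in auto)

section \<open>Contraction of lower bounds along one grid line\<close>

lemma weighted_jump:
  fixes a m E K L y z :: real
  assumes "a > 0" "m > 0" "1 - a * m > 0" "E > 0" "L \<ge> 0" "K \<le> 3 * L"
    and "y \<ge> - L * E" "z \<ge> - K * E"
  shows "(1 - a * m) * y + (a * m) * z + L * (E * exp (2 * a * m)) \<ge> 0"
proof -
  have "(1 - a * m) * y \<ge> (1 - a * m) * (- L * E)" using assms by (intro mult_left_mono) auto
  moreover have "(a * m) * z \<ge> (a * m) * (- K * E)" using assms by (intro mult_left_mono) auto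
  moreover have "L * (E * exp (2 * a * m)) \<ge> L * (E * (1 + 2 * a * m))"
    using assms exp_ge_add_one_self[of "2 * a * m"] by (intro mult_left_mono) auto
  moreover have "a * m * E * (3 * L - K) \<ge> 0" using assms by simp
  ultimately show ?thesis by (simp add: algebra_simps)
qed

lemma weighted_right_dense:
  assumes der: "has_delta_derivative TS f D t" and dense: "sigma TS t = t"
    and "a > 0" "L > 0" "K < 3 * L"
    and zero: "f t = - L * exp (2 * a * t)" and slope: "D \<ge> a * exp (2 * a * t) * (L - K)"
  shows "\<exists>d>0. \<forall>s\<in>TS. t < s \<and> s < t + d \<longrightarrow> f s + L * exp (2 * a * s) \<ge> 0"
proof -
  define E where "E = exp (2 * a * t)"
  define c where "c = a * E * (3 * L - K)"
  have "c > 0" using assms by (simp add: c_def E_def)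
  then obtain d where d: "d > 0" "\<forall>s\<in>TS. t < s \<and> s < t + d \<longrightarrow> f s \<ge> f t + (D - c / 2) * (s - t)"
    using delta_derivative_right_dense[OF der dense, of "c / 2"] by auto
  have "f s + L * exp (2 * a * s) \<ge> 0" if s: "s \<in> TS" "t < s" "s < t + d" for s
  proof -
    have "exp (2 * a * s) = E * exp (2 * a * (s - t))"
      by (simp add: E_def flip: exp_add) (simp add: algebra_simps)
    then have weight: "L * E * (1 + 2 * a * (s - t)) \<le> L * exp (2 * a * s)"
      using \<open>L > 0\<close> exp_ge_add_one_self[of "2 * a * (s - t)"] by (simp add: E_def)
    have "0 < c / 2 * (s - t)" using \<open>c > 0\<close> s by simp
    also have "\<dots> \<le> (D - c / 2 + 2 * a * L * E) * (s - t)"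
      using slope s by (intro mult_right_mono) (auto simp: c_def E_def algebra_simps)
    also have "\<dots> = f t + (D - c / 2) * (s - t) + L * E * (1 + 2 * a * (s - t))"
      by (simp add: zero E_def algebra_simps)
    also have "\<dots> \<le> f s + L * exp (2 * a * s)" using d(2) s weight by (intro add_mono) auto
    finally show ?thesis by simp
  qed
  with d(1) show ?thesis by blast
qed

lemma single_line_contraction:
  fixes f g :: "real \<Rightarrow> real"
  assumes ts: "time_scale0 TS" and a: "a > 0"
    and TS1: "\<forall>t\<in>TS. 1 - a * graininess TS t > 0"
    and eq: "\<forall>t\<in>TS. has_delta_derivative TS f (- a * (f t - g t)) t"
    and init: "f 0 \<ge> 0" and K: "K > 0"
    and g_bound: "\<forall>t\<in>TS. t \<le> T \<longrightarrow> - g t \<le> K * exp (2 * a * t)"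
  shows "\<forall>t\<in>TS. t \<le> T \<longrightarrow> - f t \<le> 3/4 * K * exp (2 * a * t)"
proof -
  define L where "L = 3/4 * K"
  have L: "L > 0" "K < 3 * L" using K by (auto simp: L_def)
  define h where "h = (\<lambda>s. f s + L * exp (2 * a * s))"
  have TS: "closed TS" "0 \<in> TS" "\<forall>t\<in>TS. 0 \<le> t" using ts by (auto simp: time_scale0_def)
  have "\<forall>t\<in>TS. 0 \<le> t \<and> t \<le> T \<longrightarrow> h t \<ge> 0"
  proof (rule time_scale_induction_nonneg[OF TS(1,2)])
    show "h 0 \<ge> 0" using init L by (simp add: h_def)
  next
    fix t assume "t \<in> TS"
    then have "(f \<longlongrightarrow> f t) (at t within TS)"
      using eq delta_derivative_continuous time_scale0_sigma_ge[OF ts] by blast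
    then show "(h \<longlongrightarrow> h t) (at t within TS)" unfolding h_def by (intro tendsto_intros)
  next
    fix t assume t: "t \<in> TS" and jumps: "t < sigma TS t" "sigma TS t \<le> T" and "h t \<ge> 0"
    define m where "m = sigma TS t - t"
    have m: "m > 0" "1 - a * m > 0" using jumps TS1 t by (auto simp: m_def graininess_def)
    have "f (sigma TS t) = f t + m * (- a * (f t - g t))"
      using delta_derivative_sigma[OF eq[rule_format, OF t] t time_scale0_sigma_ge[OF ts]]
      by (simp add: m_def)
    moreover have "exp (2 * a * sigma TS t) = exp (2 * a * t) * exp (2 * a * m)"
      by (simp add: m_def flip: exp_add) (simp add: algebra_simps)
    moreover have "(1 - a * m) * f t + (a * m) * g t + L * (exp (2 * a * t) * exp (2 * a * m)) \<ge> 0"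
      using \<open>h t \<ge> 0\<close> g_bound t jumps L by (intro weighted_jump[where K = K] a m) (auto simp: h_def)
    ultimately show "h (sigma TS t) \<ge> 0" by (simp add: h_def algebra_simps)
  next
    fix t assume t: "t \<in> TS" "t < T" and dense: "sigma TS t = t" and "h t = 0"
    have zero: "f t = - L * exp (2 * a * t)" using \<open>h t = 0\<close> by (simp add: h_def)
    have "a * g t \<ge> a * (- K * exp (2 * a * t))" using a g_bound t by (intro mult_left_mono) auto
    then have slope: "- a * (f t - g t) \<ge> a * exp (2 * a * t) * (L - K)"
      by (simp add: zero algebra_simps)
    show "\<exists>d>0. \<forall>s\<in>TS. t < s \<and> s < t + d \<longrightarrow> h s \<ge> 0"
      unfolding h_def using weighted_right_dense[OF eq[rule_format, OF t(1)] dense a L zero slope] .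
  qed
  then have "h t \<ge> 0" if "t \<in> TS" "t \<le> T" for t using TS(3) that by blast
  then show ?thesis unfolding h_def L_def by force
qed

section \<open>Positivity of the solution\<close>

lemma grid_minus: "x \<in> grid h \<Longrightarrow> x - h \<in> grid h"
proof -
  assume "x \<in> grid h"
  then obtain n where "x = h * of_int n" by (auto simp: grid_def)
  then have "x - h = h * of_int (n - 1)" by (simp add: algebra_simps)
  then show ?thesis unfolding grid_def by blast
qed

lemma grid_contraction:
  assumes ts: "time_scale0 TS" and "k > 0" "mux > 0"
    and TS1: "\<forall>t\<in>TS. 1 - k * graininess TS t / mux > 0"
    and eq: "\<forall>x\<in>grid mux. \<forall>t\<in>TS. \<exists>D. has_delta_derivative TS (u x) D t \<and>
               D + k * (u x t - u (x - mux) t) / mux = 0"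
    and init: "\<forall>x\<in>grid mux. u x 0 \<ge> 0" and K: "K > 0"
    and bound: "\<forall>y\<in>grid mux. \<forall>s\<in>TS. s \<le> T \<longrightarrow> - u y s \<le> K * exp (2 * (k / mux) * s)"
  shows "\<forall>y\<in>grid mux. \<forall>s\<in>TS. s \<le> T \<longrightarrow> - u y s \<le> 3/4 * K * exp (2 * (k / mux) * s)"
proof
  fix x assume x: "x \<in> grid mux"
  have rate: "k / mux > 0" "\<forall>t\<in>TS. 1 - k / mux * graininess TS t > 0"
    using assms(2,3) TS1 by auto
  have "has_delta_derivative TS (u x) (- (k / mux) * (u x t - u (x - mux) t)) t" if "t \<in> TS" for t
  proof -
    obtain D where "has_delta_derivative TS (u x) D t" "D + k * (u x t - u (x - mux) t) / mux = 0"
      using eq x \<open>t \<in> TS\<close> by blast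
    moreover from this(2) have "D = - (k / mux) * (u x t - u (x - mux) t)"
      using \<open>mux > 0\<close> by (simp add: field_simps)
    ultimately show ?thesis by simp
  qed
  moreover have "\<forall>t\<in>TS. t \<le> T \<longrightarrow> - u (x - mux) t \<le> K * exp (2 * (k / mux) * t)"
    using bound grid_minus[OF x] by blast
  ultimately show "\<forall>s\<in>TS. s \<le> T \<longrightarrow> - u x s \<le> 3/4 * K * exp (2 * (k / mux) * s)"
    using single_line_contraction[OF ts rate] init x K by blast
qed

lemma nonpos_if_le_geometric:
  fixes y c q :: real
  assumes "0 \<le> q" "q < 1" and "\<And>n. y \<le> c * q ^ n"
  shows "y \<le> 0"
proof -
  have "(\<lambda>n. c * q ^ n) \<longlonglongrightarrow> 0"
    using assms(1,2) by (intro tendsto_mult_right_zero LIMSEQ_power_zero) simp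
  then show ?thesis by (rule LIMSEQ_le_const) (use assms(3) in auto)
qed

lemma grid_nonneg_up_to:
  assumes ts: "time_scale0 TS" and "k > 0" "mux > 0"
    and TS1: "\<forall>t\<in>TS. 1 - k * graininess TS t / mux > 0"
    and eq: "\<forall>x\<in>grid mux. \<forall>t\<in>TS. \<exists>D. has_delta_derivative TS (u x) D t \<and>
               D + k * (u x t - u (x - mux) t) / mux = 0"
    and init: "\<forall>x\<in>grid mux. u x 0 \<ge> 0"
    and bounded: "\<forall>y\<in>grid mux. \<forall>s\<in>TS. s \<le> T \<longrightarrow> \<bar>u y s\<bar> \<le> B"
  shows "\<forall>x\<in>grid mux. \<forall>t\<in>TS. t \<le> T \<longrightarrow> u x t \<ge> 0"
proof (intro ballI impI)
  fix x t assume x: "x \<in> grid mux" and t: "t \<in> TS" "t \<le> T"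
  define w where "w = (\<lambda>s. exp (2 * (k / mux) * s))"
  have start: "- u y s \<le> (\<bar>B\<bar> + 1) * w s" if "y \<in> grid mux" "s \<in> TS" "s \<le> T" for y s
  proof -
    have "- u y s \<le> (\<bar>B\<bar> + 1) * 1" using bounded that by fastforce
    also have "\<dots> \<le> (\<bar>B\<bar> + 1) * w s"
      using assms(2,3) ts that(2) by (intro mult_left_mono) (auto simp: w_def time_scale0_def)
    finally show ?thesis .
  qed
  have "\<forall>y\<in>grid mux. \<forall>s\<in>TS. s \<le> T \<longrightarrow> - u y s \<le> (\<bar>B\<bar> + 1) * (3/4) ^ n * w s" for n
  proof (induction n)
    case (Suc n)
    from grid_contraction[OF ts assms(2,3) TS1 eq init _ Suc[unfolded w_def]] show ?case
      by (simp add: w_def mult_ac)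
  qed (use start in simp)
  then have "- u x t \<le> ((\<bar>B\<bar> + 1) * w t) * (3/4) ^ n" for n
    using x t by (simp add: mult_ac)
  then have "- u x t \<le> 0" by (rule nonpos_if_le_geometric[rotated 2]) simp_all
  then show "u x t \<ge> 0" by simp
qed

theorem mainTheorem9:
  fixes TS :: "real set" and A k mux :: real and u :: "real \<Rightarrow> real \<Rightarrow> real"
  assumes "time_scale0 TS"
    and "A > 0" and "k > 0" and "mux > 0"
    and TS1: "\<forall>t\<in>TS. 1 - k * graininess TS t / mux > 0"
    and "is_solution_P TS A k mux u"
  shows "\<forall>x\<in>grid mux. \<forall>t\<in>TS. u x t \<ge> 0"
proof (intro ballI)
  fix x t assume x: "x \<in> grid mux" and t: "t \<in> TS"
  have eq: "\<forall>x\<in>grid mux. \<forall>t\<in>TS. \<exists>D. has_delta_derivative TS (u x) D t \<and>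
              D + k * (u x t - u (x - mux) t) / mux = 0"
    and init: "\<forall>x\<in>grid mux. u x 0 \<ge> 0"
    and bounded: "\<forall>T>0. \<exists>B. \<forall>x\<in>grid mux. \<forall>t\<in>TS. t \<le> T \<longrightarrow> \<bar>u x t\<bar> \<le> B"
    using assms(2,6) unfolding is_solution_P_def by (auto simp: less_imp_le)
  have "t + 1 > 0" using assms(1) t by (fastforce simp: time_scale0_def)
  then obtain B where "\<forall>y\<in>grid mux. \<forall>s\<in>TS. s \<le> t + 1 \<longrightarrow> \<bar>u y s\<bar> \<le> B"
    using bounded by blast
  then show "u x t \<ge> 0"
    using grid_nonneg_up_to[OF assms(1,3,4) TS1 eq init] x t by auto
qed

end
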